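(* Let $d\ge 2$ and consider Hamiltonians (Hermitian operators) $H$ on $\mathbb{C}^d$ with fixed orthonormal (incoherent) basis $\{\ket{i}\}_{i=0}^{d-1}$. Then \[ \max_{\|H\|_{2}\leq 1} C_{\mathrm{gen}}(H)=\max_{\boldsymbol{p}}\sqrt{2f(\boldsymbol{p})}, \] where the maximum on the left is over all Hamiltonians on $\mathbb{C}^d$ with Hilbert–Schmidt norm $\|H\|_2=\sqrt{\mathrm{Tr}[H^\dagger H]}\le 1$, and the maximum on the right is over all probability distributions $\boldsymbol{p}=(p_0,\ldots,p_{d-1})$ on $d$ outcomes.
   Context: The dephasing map is $\Delta(\rho)=\sum_{i}\ket{i}\!\bra{i}\rho\ket{i}\!\bra{i}$. The relative entropy of coherence of a state $\rho$ is $C_\mathrm{r}(\rho)=S(\Delta(\rho))-S(\rho)$, where $S(\rho)=-\mathrm{Tr}[\rho\log_2\rho]$. The coherence generating capacity of a Hamiltonian $H$ is \[ C_{\mathrm{gen}}(H)=\max_{\rho}\left.\frac{d}{dt}C_{\mathrm{r}}\big(e^{-iHt}\rho e^{iHt}\big)\right|_{t=0}, \] the maximum over all density matrices $\rho$ on $\mathbb{C}^d$. For a probability distribution $\boldsymbol{p}$, $f(\boldsymbol{p})$ is the variance of the surprisal: \[ f(\boldsymbol{p})=\sum_{i}p_{i}\left(-\log_{2}p_{i}\right)^{2}-\Big[\sum_{i}p_{i}\left(-\log_{2}p_{i}\right)\Big]^{2} \] (with the convention $0\log_2 0=0$, $0(\log_2 0)^2=0$). *)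

theory Defs
  imports "HOL-Analysis.Analysis" "Jordan_Normal_Form.Jordan_Normal_Form"
begin

text \<open>Square complex matrices of size d are JNF matrices in carrier_mat d d.
  The incoherent basis is the standard basis indexed by 0..d-1.\<close>

definition adj :: "complex mat \<Rightarrow> complex mat" where
  "adj A = mat (dim_col A) (dim_row A) (\<lambda>(i,j). cnj (A $$ (j,i)))"

definition mtrace :: "complex mat \<Rightarrow> complex" where
  "mtrace A = (\<Sum>i<dim_row A. A $$ (i,i))"

definition hermitian :: "nat \<Rightarrow> complex mat \<Rightarrow> bool" where
  "hermitian d H \<longleftrightarrow> H \<in> carrier_mat d d \<and> adj H = H"

definition hs_norm :: "complex mat \<Rightarrow> real" where
  "hs_norm H = sqrt (Re (mtrace (adj H * H)))"

definition density :: "nat \<Rightarrow> complex mat \<Rightarrow> bool" where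
  "density d \<rho> \<longleftrightarrow> hermitian d \<rho> \<and>
     (\<forall>v \<in> carrier_vec d. 0 \<le> Re (conjugate v \<bullet> (\<rho> *\<^sub>v v))) \<and> mtrace \<rho> = 1"

definition mexp :: "complex mat \<Rightarrow> complex mat" where
  "mexp A = mat (dim_row A) (dim_col A) (\<lambda>(i,j). \<Sum>k. (A ^\<^sub>m k) $$ (i,j) / of_nat (fact k))"

definition eigvals :: "complex mat \<Rightarrow> complex list" where
  "eigvals A = (SOME as. char_poly A = (\<Prod>a\<leftarrow>as. [:- a, 1:]) \<and> length as = dim_row A)"

text \<open>Von Neumann entropy S(rho) = - Tr[rho log2 rho] = - sum of lambda log2 lambda over eigenvalues
  (note: 0 * log 2 0 = 0 in Isabelle, matching the convention 0 log 0 = 0).\<close>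
definition vn_entropy :: "complex mat \<Rightarrow> real" where
  "vn_entropy \<rho> = - (\<Sum>a\<leftarrow>eigvals \<rho>. Re a * log 2 (Re a))"

definition dephase :: "complex mat \<Rightarrow> complex mat" where
  "dephase \<rho> = mat (dim_row \<rho>) (dim_col \<rho>) (\<lambda>(i,j). if i = j then \<rho> $$ (i,i) else 0)"

definition rel_coh :: "complex mat \<Rightarrow> real" where
  "rel_coh \<rho> = vn_entropy (dephase \<rho>) - vn_entropy \<rho>"

definition evolve :: "complex mat \<Rightarrow> real \<Rightarrow> complex mat \<Rightarrow> complex mat" where
  "evolve H t \<rho> = mexp ((- \<i> * of_real t) \<cdot>\<^sub>m H) * \<rho> * mexp ((\<i> * of_real t) \<cdot>\<^sub>m H)"

text \<open>Coherence generating capacity: the supremum (attained, by the paper) over density matrices of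
  the derivative at t = 0 of C_r along the unitary evolution.\<close>
definition Cgen :: "nat \<Rightarrow> complex mat \<Rightarrow> real" where
  "Cgen d H = Sup {D. \<exists>\<rho>. density d \<rho> \<and>
       ((\<lambda>t. rel_coh (evolve H t \<rho>)) has_real_derivative D) (at 0)}"

definition prob_dist :: "nat \<Rightarrow> (nat \<Rightarrow> real) \<Rightarrow> bool" where
  "prob_dist d p \<longleftrightarrow> (\<forall>i<d. 0 \<le> p i) \<and> (\<Sum>i<d. p i) = 1"

definition surprisal_var :: "nat \<Rightarrow> (nat \<Rightarrow> real) \<Rightarrow> real" where
  "surprisal_var d p = (\<Sum>i<d. p i * (- log 2 (p i))^2) - (\<Sum>i<d. p i * (- log 2 (p i)))^2"

end

theory Submission
  imports Defs "HOL-Real_Asymp.Real_Asymp"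
begin

text \<open>
  Along rho(t) = exp(-itH) rho exp(itH) the von Neumann entropy is constant, rho(t) being
  similar to rho, so the derivative of C_r(rho(t)) at t = 0 is that of the Shannon entropy of
  the diagonal p(t).  With J_ia = Im (H_ia rho_ai) one has p_i' = sum_a (J_ia - J_ai), and the
  derivative becomes sum_{i,a} J_ia (log p_a - log p_i); coordinates with p_i = 0 contribute
  nothing, since their entropy terms have a local minimum at t = 0.  As |rho_ai|^2 <= p_i p_a,
  Cauchy-Schwarz together with ||H||_2 <= 1 bounds the derivative by
  sqrt (sum_{i,a} p_i p_a (log p_a - log p_i)^2) = sqrt (2 f(p)).  Equality holds for the pure
  state with amplitudes sqrt p_i and H_ia proportional to i sqrt (p_i p_a) (log p_a - log p_i),
  and f attains its maximum on the compact simplex.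
\<close>

section \<open>Exponentials of scaled matrices\<close>

lemma index_mult_mat_sum:
  assumes "A \<in> carrier_mat n m" "B \<in> carrier_mat m p" "i < n" "j < p"
  shows "(A * B) $$ (i,j) = (\<Sum>k<m. A $$ (i,k) * B $$ (k,j))"
  using assms by (auto simp: scalar_prod_def atLeast0LessThan intro!: sum.cong)

lemma pow_mat_Suc_left:
  assumes "A \<in> carrier_mat n n"
  shows "A ^\<^sub>m Suc k = A * A ^\<^sub>m k"
proof (induction k)
  case (Suc k)
  have "A ^\<^sub>m Suc (Suc k) = (A * A ^\<^sub>m k) * A"
    using Suc by simp
  also have "\<dots> = A * (A ^\<^sub>m k * A)"
    using assms by (simp add: assoc_mult_mat[of _ n n _ n _ n])
  finally show ?case by simp
qed (use assms in simp)

lemma pow_mat_smult: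
  fixes A :: "'a :: comm_ring_1 mat"
  assumes "A \<in> carrier_mat n n"
  shows "(c \<cdot>\<^sub>m A) ^\<^sub>m k = c ^ k \<cdot>\<^sub>m A ^\<^sub>m k"
proof (induction k)
  case (Suc k)
  have "(c \<cdot>\<^sub>m A) ^\<^sub>m Suc k = (c ^ k \<cdot>\<^sub>m A ^\<^sub>m k) * (c \<cdot>\<^sub>m A)"
    using Suc by simp
  also have "\<dots> = c ^ k \<cdot>\<^sub>m (c \<cdot>\<^sub>m (A ^\<^sub>m k * A))"
    using assms
    by (simp add: mult_smult_assoc_mat[of "A ^\<^sub>m k" n n "c \<cdot>\<^sub>m A" n]
        mult_smult_distrib[of "A ^\<^sub>m k" n n A n])
  also have "\<dots> = c ^ Suc k \<cdot>\<^sub>m A ^\<^sub>m Suc k"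
    using assms by (auto intro!: eq_matI)
  finally show ?case .
qed (use assms in \<open>auto intro!: eq_matI\<close>)

lemma pow_mat_index_bound:
  fixes A :: "'a :: real_normed_field mat"
  assumes A: "A \<in> carrier_mat n n" and "i < n" "j < n"
  shows "norm ((A ^\<^sub>m k) $$ (i,j)) \<le> (\<Sum>i<n. \<Sum>j<n. norm (A $$ (i,j))) ^ k"
  using \<open>i < n\<close> \<open>j < n\<close>
proof (induction k arbitrary: i j)
  case (Suc k)
  let ?M = "\<Sum>i<n. \<Sum>j<n. norm (A $$ (i,j))"
  have "norm ((A ^\<^sub>m Suc k) $$ (i,j)) = norm (\<Sum>m<n. (A ^\<^sub>m k) $$ (i,m) * A $$ (m,j))"
    using A Suc.prems by (subst pow_mat.simps, subst index_mult_mat_sum[of _ n n _ n]) auto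
  also have "\<dots> \<le> (\<Sum>m<n. ?M ^ k * norm (A $$ (m,j)))"
    using Suc by (auto intro!: sum_norm_le mult_right_mono simp: norm_mult)
  also have "\<dots> \<le> ?M ^ k * ?M"
    unfolding sum_distrib_left[symmetric]
    using Suc.prems by (intro mult_left_mono sum_mono member_le_sum) (auto intro!: zero_le_power sum_nonneg)
  finally show ?case by (simp add: mult.commute)
qed (use A in auto)

definition mexp_coeff :: "complex mat \<Rightarrow> nat \<Rightarrow> nat \<Rightarrow> nat \<Rightarrow> complex" where
  "mexp_coeff A i j k = (A ^\<^sub>m k) $$ (i,j) / of_nat (fact k)"

definition mexp_entry :: "complex mat \<Rightarrow> nat \<Rightarrow> nat \<Rightarrow> complex \<Rightarrow> complex" where
  "mexp_entry A i j z = (\<Sum>k. mexp_coeff A i j k * z ^ k)"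

lemma summable_mexp_entry:
  assumes A: "A \<in> carrier_mat n n" and ij: "i < n" "j < n"
  shows "summable (\<lambda>k. mexp_coeff A i j k * z ^ k)"
proof (rule summable_comparison_test')
  let ?M = "\<Sum>i<n. \<Sum>j<n. cmod (A $$ (i,j))"
  show "summable (\<lambda>k. inverse (fact k) * (?M * cmod z) ^ k)"
    by (rule summable_exp)
  show "norm (mexp_coeff A i j k * z ^ k) \<le> inverse (fact k) * (?M * cmod z) ^ k" for k
    using pow_mat_index_bound[OF A ij, of k]
    by (simp add: mexp_coeff_def norm_mult norm_divide norm_power power_mult_distrib
        divide_simps mult_right_mono)
qed

lemma diffs_mexp_coeff:
  assumes A: "A \<in> carrier_mat n n" and ij: "i < n" "j < n"
  shows "diffs (mexp_coeff A i j) k = (\<Sum>m<n. A $$ (i,m) * mexp_coeff A m j k)"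
    and "diffs (mexp_coeff A i j) k = (\<Sum>m<n. mexp_coeff A i m k * A $$ (m,j))"
proof -
  have "(of_nat (fact (Suc k)) :: complex) = of_nat (Suc k) * of_nat (fact k)"
    by (metis fact_Suc of_nat_id of_nat_mult)
  then have fact: "of_nat (Suc k) * (x / of_nat (fact (Suc k))) = x / (of_nat (fact k) :: complex)" for x
    by (simp del: of_nat_Suc)
  have "(A ^\<^sub>m Suc k) $$ (i,j) = (A * A ^\<^sub>m k) $$ (i,j)"
    by (simp only: pow_mat_Suc_left[OF A])
  also have "\<dots> = (\<Sum>m<n. A $$ (i,m) * (A ^\<^sub>m k) $$ (m,j))"
    using A ij by (intro index_mult_mat_sum) auto
  finally show "diffs (mexp_coeff A i j) k = (\<Sum>m<n. A $$ (i,m) * mexp_coeff A m j k)"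
    unfolding diffs_def mexp_coeff_def fact by (simp add: sum_divide_distrib del: of_nat_Suc)
  have "(A ^\<^sub>m Suc k) $$ (i,j) = (\<Sum>m<n. (A ^\<^sub>m k) $$ (i,m) * A $$ (m,j))"
    using A ij by (subst pow_mat.simps, intro index_mult_mat_sum) auto
  then show "diffs (mexp_coeff A i j) k = (\<Sum>m<n. mexp_coeff A i m k * A $$ (m,j))"
    unfolding diffs_def mexp_coeff_def fact by (simp add: sum_divide_distrib del: of_nat_Suc)
qed

lemma has_field_derivative_mexp_entry:
  assumes A: "A \<in> carrier_mat n n" and ij: "i < n" "j < n"
  shows "(mexp_entry A i j has_field_derivative (\<Sum>m<n. A $$ (i,m) * mexp_entry A m j z)) (at z)"
    and "(mexp_entry A i j has_field_derivative (\<Sum>m<n. mexp_entry A i m z * A $$ (m,j))) (at z)"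
proof -
  have series: "mexp_entry A i j = (\<lambda>z. \<Sum>k. mexp_coeff A i j k * z ^ k)"
    by (simp add: mexp_entry_def[abs_def])
  have deriv: "(mexp_entry A i j has_field_derivative (\<Sum>k. diffs (mexp_coeff A i j) k * z ^ k)) (at z)"
    unfolding series by (rule termdiffs_strong_converges_everywhere[OF summable_mexp_entry[OF A ij]])
  have "(\<Sum>k. diffs (mexp_coeff A i j) k * z ^ k) = (\<Sum>k. \<Sum>m<n. A $$ (i,m) * (mexp_coeff A m j k * z ^ k))"
    by (simp add: diffs_mexp_coeff(1)[OF A ij] sum_distrib_right mult.assoc)
  also have "\<dots> = (\<Sum>m<n. \<Sum>k. A $$ (i,m) * (mexp_coeff A m j k * z ^ k))"
    using A ij by (intro suminf_sum summable_mult summable_mexp_entry) auto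
  also have "\<dots> = (\<Sum>m<n. A $$ (i,m) * mexp_entry A m j z)"
    unfolding mexp_entry_def using A ij by (intro sum.cong refl suminf_mult summable_mexp_entry) auto
  finally show "(mexp_entry A i j has_field_derivative (\<Sum>m<n. A $$ (i,m) * mexp_entry A m j z)) (at z)"
    using deriv by simp
  have "(\<Sum>k. diffs (mexp_coeff A i j) k * z ^ k) = (\<Sum>k. \<Sum>m<n. (mexp_coeff A i m k * z ^ k) * A $$ (m,j))"
    by (simp add: diffs_mexp_coeff(2)[OF A ij] sum_distrib_left sum_distrib_right mult_ac)
  also have "\<dots> = (\<Sum>m<n. \<Sum>k. (mexp_coeff A i m k * z ^ k) * A $$ (m,j))"
    using A ij by (intro suminf_sum summable_mult2 summable_mexp_entry) auto
  also have "\<dots> = (\<Sum>m<n. mexp_entry A i m z * A $$ (m,j))"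
    unfolding mexp_entry_def using A ij by (intro sum.cong refl suminf_mult2[symmetric] summable_mexp_entry) auto
  finally show "(mexp_entry A i j has_field_derivative (\<Sum>m<n. mexp_entry A i m z * A $$ (m,j))) (at z)"
    using deriv by simp
qed

lemma mexp_entry_0:
  assumes "A \<in> carrier_mat n n" "i < n" "j < n"
  shows "mexp_entry A i j 0 = (if i = j then 1 else 0)"
  using assms powser_zero[of "mexp_coeff A i j"] by (simp add: mexp_entry_def mexp_coeff_def)

text \<open>The sum below has derivative zero in \<open>z\<close>: the contributions of the two factors
  cancel, so it keeps its value at \<open>z = 0\<close>.\<close>

lemma mexp_entry_inverse:
  assumes A: "A \<in> carrier_mat n n" and ij: "i < n" "j < n"
  shows "(\<Sum>m<n. mexp_entry A i m z * mexp_entry A m j (- z)) = (if i = j then 1 else 0)"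
proof -
  define F where "F z = (\<Sum>m<n. mexp_entry A i m z * mexp_entry A m j (- z))" for z
  have "(F has_field_derivative 0) (at z)" for z
  proof -
    have neg: "((\<lambda>w. mexp_entry A m j (- w)) has_field_derivative
        (\<Sum>l<n. A $$ (m,l) * mexp_entry A l j (- z)) * (-1)) (at z)" if "m < n" for m
      by (rule DERIV_chain2[OF has_field_derivative_mexp_entry(1)[OF A that ij(2)]])
        (auto intro!: derivative_eq_intros)
    have "(F has_field_derivative
        (\<Sum>m<n. (\<Sum>l<n. mexp_entry A i l z * A $$ (l,m)) * mexp_entry A m j (- z)
          + (\<Sum>l<n. A $$ (m,l) * mexp_entry A l j (- z)) * (-1) * mexp_entry A i m z)) (at z)"
      unfolding F_def[abs_def]
      by (intro DERIV_sum DERIV_mult has_field_derivative_mexp_entry(2)[OF A ij(1)] neg) auto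
    moreover have "(\<Sum>m<n. (\<Sum>l<n. mexp_entry A i l z * A $$ (l,m)) * mexp_entry A m j (- z))
        = (\<Sum>m<n. (\<Sum>l<n. A $$ (m,l) * mexp_entry A l j (- z)) * mexp_entry A i m z)"
    proof -
      have "(\<Sum>m<n. (\<Sum>l<n. mexp_entry A i l z * A $$ (l,m)) * mexp_entry A m j (- z))
          = (\<Sum>m<n. \<Sum>l<n. mexp_entry A i l z * A $$ (l,m) * mexp_entry A m j (- z))"
        by (simp add: sum_distrib_right)
      also have "\<dots> = (\<Sum>l<n. \<Sum>m<n. mexp_entry A i l z * A $$ (l,m) * mexp_entry A m j (- z))"
        by (rule sum.swap)
      finally show ?thesis
        by (simp add: sum_distrib_left sum_distrib_right ac_simps)
    qed
    ultimately show ?thesis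
      by (simp add: sum_subtractf sum.distrib)
  qed
  then have "F z = F 0"
    using has_field_derivative_zero_constant[of UNIV F] by force
  also have "F 0 = (if i = j then 1 else 0)"
    unfolding F_def using A ij by (simp add: mexp_entry_0 if_distrib[of "\<lambda>x. x * _"] cong: if_cong)
  finally show ?thesis unfolding F_def .
qed

lemma mexp_smult_carrier:
  assumes "A \<in> carrier_mat n n"
  shows "mexp (c \<cdot>\<^sub>m A) \<in> carrier_mat n n"
  using assms by (simp add: mexp_def)

lemma index_mexp_smult:
  assumes A: "A \<in> carrier_mat n n" and ij: "i < n" "j < n"
  shows "mexp (c \<cdot>\<^sub>m A) $$ (i,j) = mexp_entry A i j c"
  using A ij by (simp add: mexp_def mexp_entry_def mexp_coeff_def pow_mat_smult[OF A] mult.commute)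

lemma mexp_smult_inverse:
  assumes A: "A \<in> carrier_mat n n"
  shows "mexp (z \<cdot>\<^sub>m A) * mexp ((- z) \<cdot>\<^sub>m A) = 1\<^sub>m n"
proof (rule eq_matI)
  fix i j assume "i < dim_row (1\<^sub>m n)" "j < dim_col (1\<^sub>m n)"
  then have ij: "i < n" "j < n" by auto
  have "(mexp (z \<cdot>\<^sub>m A) * mexp ((- z) \<cdot>\<^sub>m A)) $$ (i,j) = (\<Sum>m<n. mexp_entry A i m z * mexp_entry A m j (- z))"
    using A ij by (simp add: index_mult_mat_sum[OF mexp_smult_carrier mexp_smult_carrier] index_mexp_smult)
  also have "\<dots> = 1\<^sub>m n $$ (i,j)"
    using mexp_entry_inverse[OF A ij] ij by simp
  finally show "(mexp (z \<cdot>\<^sub>m A) * mexp ((- z) \<cdot>\<^sub>m A)) $$ (i,j) = 1\<^sub>m n $$ (i,j)" .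
qed (use A in \<open>auto simp: mexp_def\<close>)

lemma mexp_zero_smult:
  assumes A: "A \<in> carrier_mat n n"
  shows "mexp (0 \<cdot>\<^sub>m A) = 1\<^sub>m n"
  using mexp_smult_carrier[OF A, of 0]
  by (intro eq_matI) (auto simp: index_mexp_smult[OF A] mexp_entry_0[OF A])

lemma hermitian_carrier: "hermitian n H \<Longrightarrow> H \<in> carrier_mat n n"
  by (simp add: hermitian_def)

lemma hermitian_index:
  assumes "hermitian n A" "i < n" "j < n"
  shows "A $$ (j,i) = cnj (A $$ (i,j))"
proof -
  have A: "A \<in> carrier_mat n n" and "adj A = A"
    using assms(1) by (simp_all add: hermitian_def)
  then have "A $$ (j,i) = adj A $$ (j,i)"
    by simp
  also have "\<dots> = cnj (A $$ (i,j))"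
    using A assms(2,3) by (simp add: adj_def)
  finally show ?thesis .
qed

lemma hermitian_pow_mat_index:
  assumes h: "hermitian n A" and ij: "i < n" "j < n"
  shows "(A ^\<^sub>m k) $$ (j,i) = cnj ((A ^\<^sub>m k) $$ (i,j))"
  using ij
proof (induction k arbitrary: j)
  case 0
  then show ?case using h by (auto simp: hermitian_def)
next
  case (Suc k)
  have A: "A \<in> carrier_mat n n"
    using h by (rule hermitian_carrier)
  have "(A ^\<^sub>m Suc k) $$ (j,i) = (A * A ^\<^sub>m k) $$ (j,i)"
    by (simp only: pow_mat_Suc_left[OF A])
  also have "\<dots> = (\<Sum>m<n. A $$ (j,m) * (A ^\<^sub>m k) $$ (m,i))"
    using A Suc.prems ij by (intro index_mult_mat_sum) auto
  also have "\<dots> = cnj (\<Sum>m<n. (A ^\<^sub>m k) $$ (i,m) * A $$ (m,j))"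
    using Suc h by (simp add: hermitian_index[of n A _ j] mult.commute)
  also have "(\<Sum>m<n. (A ^\<^sub>m k) $$ (i,m) * A $$ (m,j)) = (A ^\<^sub>m Suc k) $$ (i,j)"
    using A Suc.prems ij by (subst pow_mat.simps, intro index_mult_mat_sum[symmetric]) auto
  finally show ?case .
qed

lemma mexp_entry_cnj:
  assumes h: "hermitian n A" and ij: "i < n" "j < n"
  shows "mexp_entry A j i (cnj z) = cnj (mexp_entry A i j z)"
proof -
  have A: "A \<in> carrier_mat n n"
    using h by (rule hermitian_carrier)
  have "(\<lambda>k. cnj (mexp_coeff A i j k * z ^ k)) sums cnj (mexp_entry A i j z)"
    unfolding mexp_entry_def by (intro sums_cnj[THEN iffD2] summable_sums summable_mexp_entry[OF A ij])
  then have "(\<lambda>k. mexp_coeff A j i k * cnj z ^ k) sums cnj (mexp_entry A i j z)"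
    by (simp add: mexp_coeff_def hermitian_pow_mat_index[OF h ij])
  then show ?thesis
    unfolding mexp_entry_def by (rule sums_unique[symmetric])
qed

lemma mexp_entry_eq_delta:
  assumes "\<And>k. (A ^\<^sub>m Suc k) $$ (i,j) = 0" and "A \<in> carrier_mat n n" "i < n" "j < n"
  shows "mexp_entry A i j z = (if i = j then 1 else 0)"
proof -
  have "mexp_coeff A i j k * z ^ k = (if k = 0 then (if i = j then 1 else 0) else 0)" for k
    using assms(1)[of "k - 1"] assms(2-4) by (cases k) (auto simp: mexp_coeff_def)
  then have "(\<lambda>k. mexp_coeff A i j k * z ^ k) sums (if i = j then 1 else 0)"
    using sums_single[of 0 "\<lambda>_. if i = j then (1::complex) else 0"] by simp
  then show ?thesis
    unfolding mexp_entry_def by (simp add: sums_iff)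
qed

lemma pow_mat_index_isolated:
  assumes A: "A \<in> carrier_mat n n" and i: "i < n" and a: "a < n"
    and row: "\<And>b. b < n \<Longrightarrow> A $$ (i,b) = 0" and col: "\<And>b. b < n \<Longrightarrow> A $$ (b,i) = 0"
  shows "(A ^\<^sub>m Suc k) $$ (i,a) = 0" and "(A ^\<^sub>m Suc k) $$ (a,i) = 0"
proof -
  have "(A ^\<^sub>m Suc k) $$ (i,a) = (A * A ^\<^sub>m k) $$ (i,a)"
    by (simp only: pow_mat_Suc_left[OF A])
  also have "\<dots> = (\<Sum>m<n. A $$ (i,m) * (A ^\<^sub>m k) $$ (m,a))"
    using A i a by (intro index_mult_mat_sum) auto
  finally show "(A ^\<^sub>m Suc k) $$ (i,a) = 0"
    using row by simp
  have "(A ^\<^sub>m Suc k) $$ (a,i) = (\<Sum>m<n. (A ^\<^sub>m k) $$ (a,m) * A $$ (m,i))"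
    using A i a by (subst pow_mat.simps, intro index_mult_mat_sum) auto
  then show "(A ^\<^sub>m Suc k) $$ (a,i) = 0"
    using col by simp
qed

section \<open>Density matrices\<close>

lemma quadratic_nonneg_imp_discriminant:
  fixes a b k :: real
  assumes nonneg: "\<And>s. 0 \<le> a * s\<^sup>2 - 2 * k * s + b" and "0 \<le> a"
  shows "k\<^sup>2 \<le> a * b"
proof (cases "a = 0")
  case True
  have "k = 0"
  proof (rule ccontr)
    assume "k \<noteq> 0"
    then have "2 * k * ((b + 1) / (2 * k)) = b + 1"
      by simp
    then show False
      using nonneg[of "(b + 1) / (2 * k)"] True by simp
  qed
  then show ?thesis
    using nonneg[of 0] \<open>0 \<le> a\<close> by simp
next
  case False
  then have a: "0 < a"
    using \<open>0 \<le> a\<close> by simp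
  have "a * (k / a)\<^sup>2 - 2 * k * (k / a) + b = b - k\<^sup>2 / a"
    using a by (simp add: power2_eq_square)
  then have "k\<^sup>2 / a \<le> b"
    using nonneg[of "k / a"] by simp
  then show ?thesis
    using a by (simp add: pos_divide_le_eq mult.commute)
qed

lemma density_carrier: "density n \<rho> \<Longrightarrow> \<rho> \<in> carrier_mat n n"
  by (simp add: density_def hermitian_def)

lemma density_quadratic_form_nonneg:
  assumes "density n \<rho>"
  shows "0 \<le> Re (\<Sum>i<n. cnj (f i) * (\<Sum>j<n. \<rho> $$ (i,j) * f j))"
proof -
  have "conjugate (vec n f) \<bullet> (\<rho> *\<^sub>v vec n f) = (\<Sum>i<n. cnj (f i) * (\<Sum>j<n. \<rho> $$ (i,j) * f j))"
    using density_carrier[OF assms] by (auto simp: scalar_prod_def atLeast0LessThan intro!: sum.cong)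
  moreover have "0 \<le> Re (conjugate (vec n f) \<bullet> (\<rho> *\<^sub>v vec n f))"
    using assms by (simp add: density_def)
  ultimately show ?thesis
    by simp
qed

lemma density_diag:
  assumes dens: "density n \<rho>" and i: "i < n"
  shows "\<rho> $$ (i,i) = of_real (Re (\<rho> $$ (i,i)))" and "0 \<le> Re (\<rho> $$ (i,i))"
proof -
  have "\<rho> $$ (i,i) = cnj (\<rho> $$ (i,i))"
    using dens i hermitian_index[of n \<rho> i i] by (simp add: density_def)
  then have "Im (\<rho> $$ (i,i)) = 0"
    by (simp add: complex_eq_iff)
  then show "\<rho> $$ (i,i) = of_real (Re (\<rho> $$ (i,i)))"
    by (simp add: complex_eq_iff)
  have "0 \<le> Re (\<Sum>k<n. cnj (if k = i then 1 else 0) * (\<Sum>j<n. \<rho> $$ (k,j) * (if j = i then 1 else 0)))"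
    by (rule density_quadratic_form_nonneg[OF dens])
  also have "(\<Sum>k<n. cnj (if k = i then 1 else 0) * (\<Sum>j<n. \<rho> $$ (k,j) * (if j = i then 1 else 0)))
      = \<rho> $$ (i,i)"
    using i by (simp add: if_distrib[of "\<lambda>y. _ * y"] if_distrib[of "\<lambda>y. y * _"] if_distrib[of cnj]
        sum.delta cong: if_cong)
  finally show "0 \<le> Re (\<rho> $$ (i,i))" .
qed

lemma density_two_point_form:
  assumes dens: "density n \<rho>" and ij: "i < n" "j < n" "i \<noteq> j"
  shows "0 \<le> (cmod x)\<^sup>2 * Re (\<rho> $$ (i,i)) + 2 * Re (cnj x * \<rho> $$ (i,j)) + Re (\<rho> $$ (j,j))"
proof -
  define f where "f l = (if l = i then x else 0) + (if l = j then 1 else 0)" for l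
  have inner: "(\<Sum>l<n. \<rho> $$ (k,l) * f l) = \<rho> $$ (k,i) * x + \<rho> $$ (k,j)" for k
    using ij by (simp add: f_def distrib_left sum.distrib if_distrib[of "\<lambda>y. _ * y"] sum.delta cong: if_cong)
  have "(\<Sum>k<n. cnj (f k) * (\<Sum>l<n. \<rho> $$ (k,l) * f l))
      = cnj x * (\<rho> $$ (i,i) * x) + cnj x * \<rho> $$ (i,j) + (\<rho> $$ (j,i) * x + \<rho> $$ (j,j))"
    using ij unfolding inner by (simp add: f_def distrib_left distrib_right sum.distrib if_distrib[of cnj]
        if_distrib[of "\<lambda>y. y * _"] sum.delta cong: if_cong)
  also have "\<rho> $$ (j,i) = cnj (\<rho> $$ (i,j))"
    using dens ij hermitian_index[of n \<rho> i j] by (simp add: density_def)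
  also have "cnj x * (\<rho> $$ (i,i) * x) = of_real ((cmod x)\<^sup>2 * Re (\<rho> $$ (i,i)))"
  proof -
    define a where "a = Re (\<rho> $$ (i,i))"
    have "\<rho> $$ (i,i) = of_real a"
      using density_diag(1)[OF dens ij(1)] by (simp add: a_def)
    then show ?thesis
      unfolding a_def[symmetric] by (simp only: of_real_mult complex_norm_square) (simp add: mult_ac)
  qed
  finally show ?thesis
    using density_quadratic_form_nonneg[OF dens, of f] by (simp add: algebra_simps)
qed

lemma density_offdiag_bound:
  assumes dens: "density n \<rho>" and ij: "i < n" "j < n"
  shows "(cmod (\<rho> $$ (i,j)))\<^sup>2 \<le> Re (\<rho> $$ (i,i)) * Re (\<rho> $$ (j,j))"
proof (cases "i = j")
  case True
  then show ?thesis
    using density_diag[OF dens ij(1)] by (metis norm_of_real power2_abs power2_eq_square order_refl)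
next
  case False
  define c where "c = cmod (\<rho> $$ (i,j))"
  have "0 \<le> (c\<^sup>2 * Re (\<rho> $$ (i,i))) * s\<^sup>2 - 2 * c\<^sup>2 * s + Re (\<rho> $$ (j,j))" for s
  proof -
    define x where "x = - (of_real s * \<rho> $$ (i,j))"
    have "cnj x * \<rho> $$ (i,j) = of_real (- s * c\<^sup>2)"
      unfolding x_def c_def by (simp only: of_real_mult of_real_minus complex_norm_square) (simp add: mult_ac)
    then have re: "Re (cnj x * \<rho> $$ (i,j)) = - s * c\<^sup>2"
      by simp
    have nx: "(cmod x)\<^sup>2 = s\<^sup>2 * c\<^sup>2"
      by (simp add: x_def c_def norm_mult power_mult_distrib)
    show ?thesis
      using density_two_point_form[OF dens ij False, of x] unfolding re nx by (simp add: algebra_simps)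
  qed
  then have "(c\<^sup>2)\<^sup>2 \<le> (c\<^sup>2 * Re (\<rho> $$ (i,i))) * Re (\<rho> $$ (j,j))"
    using density_diag(2)[OF dens ij(1)] by (intro quadratic_nonneg_imp_discriminant) auto
  then have le: "c\<^sup>2 * c\<^sup>2 \<le> c\<^sup>2 * (Re (\<rho> $$ (i,i)) * Re (\<rho> $$ (j,j)))"
    by (simp only: power2_eq_square[of "c\<^sup>2"] mult.assoc)
  show ?thesis
    unfolding c_def[symmetric]
  proof (cases "c = 0")
    case True
    then show "c\<^sup>2 \<le> Re (\<rho> $$ (i,i)) * Re (\<rho> $$ (j,j))"
      using density_diag(2)[OF dens ij(1)] density_diag(2)[OF dens ij(2)] by simp
  next
    case False
    then show "c\<^sup>2 \<le> Re (\<rho> $$ (i,i)) * Re (\<rho> $$ (j,j))"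
      using mult_left_le_imp_le[OF le] by simp
  qed
qed

lemma density_zero_diag:
  assumes dens: "density n \<rho>" and i: "i < n" and a: "a < n" and zero: "Re (\<rho> $$ (i,i)) = 0"
  shows "\<rho> $$ (i,a) = 0" and "\<rho> $$ (a,i) = 0"
  using density_offdiag_bound[OF dens i a] density_offdiag_bound[OF dens a i] zero by simp_all

section \<open>The diagonal under unitary evolution\<close>

lemma evolve_carrier:
  assumes "H \<in> carrier_mat n n" "\<rho> \<in> carrier_mat n n"
  shows "evolve H t \<rho> \<in> carrier_mat n n"
  unfolding evolve_def using assms by (auto intro!: mult_carrier_mat[of _ n n _ n] mexp_smult_carrier)

lemma similar_mat_evolve:
  assumes H: "H \<in> carrier_mat n n" and \<rho>: "\<rho> \<in> carrier_mat n n"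
  shows "similar_mat (evolve H t \<rho>) \<rho>"
proof -
  let ?U = "mexp ((- \<i> * of_real t) \<cdot>\<^sub>m H)" and ?V = "mexp ((\<i> * of_real t) \<cdot>\<^sub>m H)"
  have "?U * ?V = 1\<^sub>m n" "?V * ?U = 1\<^sub>m n"
    using mexp_smult_inverse[OF H, of "- \<i> * of_real t"] mexp_smult_inverse[OF H, of "\<i> * of_real t"]
    by simp_all
  then have "similar_mat_wit (evolve H t \<rho>) \<rho> ?U ?V"
    using evolve_carrier[OF H \<rho>, of t] \<rho> mexp_smult_carrier[OF H]
    by (simp add: similar_mat_wit_def carrier_matD[OF evolve_carrier[OF H \<rho>]]) (simp add: evolve_def)
  then show ?thesis
    unfolding similar_mat_def by blast
qed

lemma evolve_at_0:
  assumes "H \<in> carrier_mat n n" "\<rho> \<in> carrier_mat n n"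
  shows "evolve H 0 \<rho> = \<rho>"
  using assms by (simp add: evolve_def mexp_zero_smult)

lemma index_evolve_diag:
  assumes H: "H \<in> carrier_mat n n" and \<rho>: "\<rho> \<in> carrier_mat n n" and i: "i < n"
  shows "evolve H t \<rho> $$ (i,i)
    = (\<Sum>b<n. (\<Sum>a<n. mexp_entry H i a (- \<i> * of_real t) * \<rho> $$ (a,b)) * mexp_entry H b i (\<i> * of_real t))"
proof -
  let ?U = "mexp ((- \<i> * of_real t) \<cdot>\<^sub>m H)" and ?V = "mexp ((\<i> * of_real t) \<cdot>\<^sub>m H)"
  have U: "?U \<in> carrier_mat n n" and V: "?V \<in> carrier_mat n n"
    using mexp_smult_carrier[OF H] by auto
  have "evolve H t \<rho> $$ (i,i) = (\<Sum>b<n. (?U * \<rho>) $$ (i,b) * ?V $$ (b,i))"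
    unfolding evolve_def using U V \<rho> i by (intro index_mult_mat_sum) auto
  also have "\<dots> = (\<Sum>b<n. (\<Sum>a<n. ?U $$ (i,a) * \<rho> $$ (a,b)) * ?V $$ (b,i))"
    using U \<rho> i by (intro sum.cong refl arg_cong2[where f = "(*)"] index_mult_mat_sum) auto
  finally show ?thesis
    using H i by (simp add: index_mexp_smult)
qed

definition prob_current :: "complex mat \<Rightarrow> complex mat \<Rightarrow> nat \<Rightarrow> nat \<Rightarrow> real" where
  "prob_current H \<rho> i a = Im (H $$ (i,a) * \<rho> $$ (a,i))"

definition net_current :: "nat \<Rightarrow> complex mat \<Rightarrow> complex mat \<Rightarrow> nat \<Rightarrow> real" where
  "net_current n H \<rho> i = (\<Sum>a<n. prob_current H \<rho> i a - prob_current H \<rho> a i)"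

lemma has_field_derivative_mexp_entry_at_0:
  assumes "A \<in> carrier_mat n n" "i < n" "j < n"
  shows "((\<lambda>z. mexp_entry A i j (c * z)) has_field_derivative c * A $$ (i,j)) (at 0)"
proof -
  have "((\<lambda>z. mexp_entry A i j (c * z)) has_field_derivative (\<Sum>m<n. A $$ (i,m) * mexp_entry A m j (c * 0)) * c) (at 0)"
    by (rule DERIV_chain2[OF has_field_derivative_mexp_entry(1)[OF assms]]) (rule DERIV_cmult_Id)
  then show ?thesis
    using assms by (simp add: mexp_entry_0 if_distrib[of "\<lambda>x. _ * x"] sum.delta' mult.commute cong: if_cong)
qed

lemma has_real_derivative_evolve_diag:
  assumes H: "H \<in> carrier_mat n n" and \<rho>: "\<rho> \<in> carrier_mat n n" and i: "i < n"
  shows "((\<lambda>t. Re (evolve H t \<rho> $$ (i,i))) has_real_derivative net_current n H \<rho> i) (at 0)"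
proof -
  define F where
    "F z = (\<Sum>b<n. (\<Sum>a<n. mexp_entry H i a (- \<i> * z) * \<rho> $$ (a,b)) * mexp_entry H b i (\<i> * z))" for z
  define D where
    "D = (\<Sum>a<n. - \<i> * H $$ (i,a) * \<rho> $$ (a,i)) + (\<Sum>b<n. \<i> * \<rho> $$ (i,b) * H $$ (b,i))"
  have left: "((\<lambda>z. \<Sum>a<n. mexp_entry H i a (- \<i> * z) * \<rho> $$ (a,b)) has_field_derivative
      (\<Sum>a<n. - \<i> * H $$ (i,a) * \<rho> $$ (a,b))) (at 0)" for b
    using H i by (intro DERIV_sum DERIV_cmult_right has_field_derivative_mexp_entry_at_0) auto
  have right: "((\<lambda>z. mexp_entry H b i (\<i> * z)) has_field_derivative \<i> * H $$ (b,i)) (at 0)" if "b < n" for b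
    using H that i by (rule has_field_derivative_mexp_entry_at_0)
  have "(F has_field_derivative
      (\<Sum>b<n. (\<Sum>a<n. - \<i> * H $$ (i,a) * \<rho> $$ (a,b)) * mexp_entry H b i (\<i> * 0)
        + \<i> * H $$ (b,i) * (\<Sum>a<n. mexp_entry H i a (- \<i> * 0) * \<rho> $$ (a,b)))) (at 0)"
    unfolding F_def[abs_def] by (intro DERIV_sum DERIV_mult left right) simp
  moreover have "(\<Sum>b<n. (\<Sum>a<n. - \<i> * H $$ (i,a) * \<rho> $$ (a,b)) * mexp_entry H b i (\<i> * 0)
        + \<i> * H $$ (b,i) * (\<Sum>a<n. mexp_entry H i a (- \<i> * 0) * \<rho> $$ (a,b))) = D"
    using H i by (simp add: D_def mexp_entry_0 if_distrib[of "\<lambda>x. _ * x"] if_distrib[of "\<lambda>x. x * _"]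
        sum.delta sum.delta' sum.distrib mult_ac cong: if_cong)
  ultimately have "(F has_field_derivative D) (at (of_real 0))"
    by simp
  then have "((\<lambda>t. Re (F (of_real t))) has_real_derivative Re D) (at 0)"
    by (intro has_field_derivative_Re has_vector_derivative_real_field)
  moreover have "Re D = net_current n H \<rho> i"
  proof -
    have "Re (- \<i> * x * y) = Im (x * y)" "Re (\<i> * y * x) = - Im (x * y)" for x y :: complex
      by (simp_all add: algebra_simps)
    then show ?thesis
      unfolding net_current_def prob_current_def sum_subtractf D_def
      by (simp only: Re_sum plus_complex.sel sum_negf)
  qed
  ultimately show ?thesis
    by (simp add: F_def index_evolve_diag[OF H \<rho> i])
qed

lemma evolve_diag_nonneg:
  assumes h: "hermitian n H" and dens: "density n \<rho>" and i: "i < n"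
  shows "0 \<le> Re (evolve H t \<rho> $$ (i,i))"
proof -
  have H: "H \<in> carrier_mat n n"
    using h by (rule hermitian_carrier)
  define u where "u a = cnj (mexp_entry H i a (- \<i> * of_real t))" for a
  have "mexp_entry H b i (\<i> * of_real t) = u b" if "b < n" for b
    using mexp_entry_cnj[OF h i that, of "- \<i> * of_real t"] by (simp add: u_def)
  then have "evolve H t \<rho> $$ (i,i) = (\<Sum>b<n. \<Sum>a<n. cnj (u a) * \<rho> $$ (a,b) * u b)"
    by (simp add: index_evolve_diag[OF H density_carrier[OF dens] i] u_def sum_distrib_right)
  also have "\<dots> = (\<Sum>a<n. cnj (u a) * (\<Sum>b<n. \<rho> $$ (a,b) * u b))"
    by (subst sum.swap) (simp add: sum_distrib_left mult.assoc)
  finally show ?thesis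
    using density_quadratic_form_nonneg[OF dens] by simp
qed

lemma evolve_diag_isolated:
  assumes H: "H \<in> carrier_mat n n" and \<rho>: "\<rho> \<in> carrier_mat n n" and i: "i < n"
    and row: "\<And>a. a < n \<Longrightarrow> H $$ (i,a) = 0" and col: "\<And>a. a < n \<Longrightarrow> H $$ (a,i) = 0"
  shows "evolve H t \<rho> $$ (i,i) = \<rho> $$ (i,i)"
proof -
  have "mexp_entry H i a z = (if i = a then 1 else 0)" "mexp_entry H a i z = (if a = i then 1 else 0)"
    if "a < n" for a z
    using mexp_entry_eq_delta[OF pow_mat_index_isolated(1)[OF H i that row col] H i that]
      mexp_entry_eq_delta[OF pow_mat_index_isolated(2)[OF H i that row col] H that i]
    by auto
  then show ?thesis
    using i by (simp add: index_evolve_diag[OF H \<rho> i] if_distrib[of "\<lambda>x. x * _"] if_distrib[of "\<lambda>x. _ * x"]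
        sum.delta sum.delta' cong: if_cong)
qed

section \<open>Entropies of the evolved and of the dephased state\<close>

lemma order_prod_linear_factors:
  fixes as :: "'a :: idom list"
  shows "order x (\<Prod>a\<leftarrow>as. [:- a, 1:]) = count (mset as) x"
proof (induction as)
  case (Cons a as)
  let ?p = "\<Prod>a\<leftarrow>as. [:- a, 1:]"
  have "[:- a, 1:] \<noteq> 0" "?p \<noteq> 0"
    by (simp, subst prod_list_zero_iff, auto)
  then have ne: "[:- a, 1:] * ?p \<noteq> 0"
    by (rule no_zero_divisors)
  have "order x (\<Prod>a\<leftarrow>a # as. [:- a, 1:]) = order x ([:- a, 1:] * ?p)"
    by (simp only: list.map prod_list.Cons)
  also have "\<dots> = order x [:- a, 1:] + order x ?p"
    using ne by (rule order_mult)
  also have "order x [:- a, 1:] = (if x = a then 1 else 0)"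
    using order_power_n_n[of a 1] by (auto intro: order_0I)
  finally show ?case
    using Cons by simp
qed simp

lemma mset_eq_if_prod_linear_factors_eq:
  fixes as bs :: "'a :: idom list"
  assumes "(\<Prod>a\<leftarrow>as. [:- a, 1:]) = (\<Prod>a\<leftarrow>bs. [:- a, 1:])"
  shows "mset as = mset bs"
  by (rule multiset_eqI) (metis assms order_prod_linear_factors)

lemma eigvals_similar:
  assumes "similar_mat A B"
  shows "eigvals A = eigvals B"
proof -
  obtain n P Q where "{A, B, P, Q} \<subseteq> carrier_mat n n"
    using similar_matD[OF assms] by blast
  then have "dim_row A = dim_row B"
    by auto
  then show ?thesis
    unfolding eigvals_def using char_poly_similar[OF assms] by simp
qed

lemma vn_entropy_similar: "similar_mat A B \<Longrightarrow> vn_entropy A = vn_entropy B"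
  by (simp add: vn_entropy_def eigvals_similar)

lemma mset_eigvals_upper_triangular:
  assumes A: "A \<in> carrier_mat n n" and "upper_triangular A"
  shows "mset (eigvals A) = mset (diag_mat A)"
proof -
  have diag: "char_poly A = (\<Prod>a\<leftarrow>diag_mat A. [:- a, 1:])"
    by (rule char_poly_upper_triangular[OF assms])
  then have "\<exists>as. char_poly A = (\<Prod>a\<leftarrow>as. [:- a, 1:]) \<and> length as = dim_row A"
    by (intro exI[of _ "diag_mat A"]) (simp add: diag_mat_def)
  then have "char_poly A = (\<Prod>a\<leftarrow>eigvals A. [:- a, 1:])"
    unfolding eigvals_def by (rule someI2_ex) blast
  then show ?thesis
    using diag by (intro mset_eq_if_prod_linear_factors_eq) simp
qed

lemma vn_entropy_dephase:
  assumes A: "A \<in> carrier_mat n n"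
  shows "vn_entropy (dephase A) = - (\<Sum>i<n. Re (A $$ (i,i)) * log 2 (Re (A $$ (i,i))))"
proof -
  let ?f = "\<lambda>a. Re a * log 2 (Re a)"
  have D: "dephase A \<in> carrier_mat n n" "upper_triangular (dephase A)"
    using A by (auto simp: dephase_def upper_triangular_def)
  have "(\<Sum>a\<leftarrow>eigvals (dephase A). ?f a) = (\<Sum>a\<in>#mset (eigvals (dephase A)). ?f a)"
    by (simp only: mset_map[symmetric] sum_mset_sum_list)
  also have "\<dots> = (\<Sum>a\<leftarrow>diag_mat (dephase A). ?f a)"
    by (simp only: mset_eigvals_upper_triangular[OF D] mset_map[symmetric] sum_mset_sum_list)
  also have "\<dots> = (\<Sum>i<n. ?f (A $$ (i,i)))"
    using A by (simp add: diag_mat_def dephase_def sum_list_distinct_conv_sum_set atLeast0LessThan)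
  finally show ?thesis
    by (simp add: vn_entropy_def)
qed

section \<open>The rate of coherence generation\<close>

lemma has_real_derivative_sum_local_min:
  fixes f :: "'i \<Rightarrow> real \<Rightarrow> real"
  assumes "finite I" "P \<subseteq> I"
    and deriv: "\<And>i. i \<in> P \<Longrightarrow> (f i has_real_derivative f' i) (at x)"
    and min: "\<And>i. i \<in> I - P \<Longrightarrow> \<forall>\<^sub>F y in at x. f i x \<le> f i y"
    and sum: "((\<lambda>y. \<Sum>i\<in>I. f i y) has_real_derivative D) (at x)"
  shows "D = (\<Sum>i\<in>P. f' i)"
proof -
  have split: "(\<Sum>i\<in>I. f i y) - (\<Sum>i\<in>P. f i y) = (\<Sum>i\<in>I - P. f i y)" for y
    using sum.subset_diff[OF assms(2,1), of "\<lambda>i. f i y"] by simp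
  have "((\<lambda>y. \<Sum>i\<in>P. f i y) has_real_derivative (\<Sum>i\<in>P. f' i)) (at x)"
    using deriv by (rule DERIV_sum)
  from DERIV_diff[OF sum this]
  have "((\<lambda>y. \<Sum>i\<in>I - P. f i y) has_real_derivative D - (\<Sum>i\<in>P. f' i)) (at x)"
    unfolding split .
  moreover have "\<forall>\<^sub>F y in at x. \<forall>i\<in>I - P. f i x \<le> f i y"
    using min \<open>finite I\<close> by (intro eventually_ball_finite) auto
  then have "\<forall>\<^sub>F y in at x. (\<Sum>i\<in>I - P. f i x) \<le> (\<Sum>i\<in>I - P. f i y)"
    by (rule eventually_mono) (rule sum_mono, blast)
  ultimately have "(\<lambda>h. (D - (\<Sum>i\<in>P. f' i)) * h) = (\<lambda>h. 0)"
    by (intro has_derivative_local_min) (simp_all add: has_field_derivative_def)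
  then show ?thesis
    by (metis mult_1_right right_minus_eq)
qed

lemma mult_log_nonpos:
  fixes x :: real
  assumes "0 \<le> x" "x \<le> 1"
  shows "x * log 2 x \<le> 0"
proof (cases "x = 0")
  case False
  then have "log 2 x \<le> 0"
    using assms by simp
  then show ?thesis
    using assms by (simp add: mult_nonneg_nonpos)
qed simp

lemma has_real_derivative_neg_mult_log:
  fixes x :: real
  assumes "0 < x"
  shows "((\<lambda>x. - (x * log 2 x)) has_real_derivative - (log 2 x + 1 / ln 2)) (at x)"
  using assms by (auto intro!: derivative_eq_intros simp: field_simps log_def)

lemma sum_net_flow_weighted:
  fixes J :: "nat \<Rightarrow> nat \<Rightarrow> real"
  shows "(\<Sum>i<n. - (L i + c) * (\<Sum>a<n. J i a - J a i)) = (\<Sum>i<n. \<Sum>a<n. J i a * (L a - L i))"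
proof -
  have "- (L i + c) * (\<Sum>a<n. J i a - J a i) = (\<Sum>a<n. (L i + c) * J a i) - (\<Sum>a<n. (L i + c) * J i a)" for i
    unfolding sum_distrib_left[symmetric] sum_subtractf by (simp add: algebra_simps)
  then have "(\<Sum>i<n. - (L i + c) * (\<Sum>a<n. J i a - J a i))
      = (\<Sum>i<n. \<Sum>a<n. (L i + c) * J a i) - (\<Sum>i<n. \<Sum>a<n. (L i + c) * J i a)"
    by (simp add: sum_subtractf)
  also have "(\<Sum>i<n. \<Sum>a<n. (L i + c) * J a i) = (\<Sum>i<n. \<Sum>a<n. (L a + c) * J i a)"
    by (rule sum.swap)
  also have "\<dots> - (\<Sum>i<n. \<Sum>a<n. (L i + c) * J i a) = (\<Sum>i<n. \<Sum>a<n. J i a * (L a - L i))"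
    by (simp add: sum_subtractf[symmetric] algebra_simps)
  finally show ?thesis .
qed

definition diag_probs :: "complex mat \<Rightarrow> nat \<Rightarrow> real" where
  "diag_probs \<rho> i = Re (\<rho> $$ (i,i))"

definition coherence_rate :: "nat \<Rightarrow> complex mat \<Rightarrow> complex mat \<Rightarrow> real" where
  "coherence_rate n H \<rho> =
    (\<Sum>i<n. \<Sum>a<n. prob_current H \<rho> i a * (log 2 (diag_probs \<rho> a) - log 2 (diag_probs \<rho> i)))"

lemma coherence_rate_eq_net_currents:
  "coherence_rate n H \<rho> = (\<Sum>i<n. - (log 2 (diag_probs \<rho> i) + 1 / ln 2) * net_current n H \<rho> i)"
  unfolding coherence_rate_def net_current_def by (rule sum_net_flow_weighted[symmetric])

lemma rel_coh_evolve:
  assumes H: "H \<in> carrier_mat n n" and \<rho>: "\<rho> \<in> carrier_mat n n"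
  shows "rel_coh (evolve H t \<rho>)
    = (\<Sum>i<n. - (Re (evolve H t \<rho> $$ (i,i)) * log 2 (Re (evolve H t \<rho> $$ (i,i))))) - vn_entropy \<rho>"
  unfolding rel_coh_def vn_entropy_dephase[OF evolve_carrier[OF H \<rho>]]
    vn_entropy_similar[OF similar_mat_evolve[OF H \<rho>]]
  by (simp add: sum_negf)

lemma diag_probs_nonneg: "density n \<rho> \<Longrightarrow> i < n \<Longrightarrow> 0 \<le> diag_probs \<rho> i"
  using density_diag(2) by (simp add: diag_probs_def)

lemma net_current_zero:
  assumes dens: "density n \<rho>" and "i < n" "diag_probs \<rho> i = 0"
  shows "net_current n H \<rho> i = 0"
  using density_zero_diag[OF dens assms(2) _ assms(3)[unfolded diag_probs_def]]
  by (simp add: net_current_def prob_current_def)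

context
  fixes n :: nat and H \<rho> :: "complex mat"
  assumes herm: "hermitian n H" and dens: "density n \<rho>"
begin

lemma has_real_derivative_evolve_diag_entropy:
  assumes i: "i < n" and pos: "0 < diag_probs \<rho> i"
  shows "((\<lambda>t. - (Re (evolve H t \<rho> $$ (i,i)) * log 2 (Re (evolve H t \<rho> $$ (i,i))))) has_real_derivative
    - (log 2 (diag_probs \<rho> i) + 1 / ln 2) * net_current n H \<rho> i) (at 0)"
proof -
  have "Re (evolve H 0 \<rho> $$ (i,i)) = diag_probs \<rho> i"
    by (simp add: evolve_at_0[OF hermitian_carrier[OF herm] density_carrier[OF dens]] diag_probs_def)
  then have "((\<lambda>x. - (x * log 2 x)) has_real_derivative - (log 2 (diag_probs \<rho> i) + 1 / ln 2))
      (at (Re (evolve H 0 \<rho> $$ (i,i))))"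
    using has_real_derivative_neg_mult_log[OF pos] by simp
  then show ?thesis
    by (rule DERIV_chain2[OF _ has_real_derivative_evolve_diag[OF hermitian_carrier[OF herm] density_carrier[OF dens] i]])
qed

lemma evolve_diag_entropy_nonneg_near_0:
  assumes i: "i < n" and zero: "diag_probs \<rho> i = 0"
  shows "\<forall>\<^sub>F t in at 0. Re (evolve H t \<rho> $$ (i,i)) * log 2 (Re (evolve H t \<rho> $$ (i,i))) \<le> 0"
proof -
  let ?q = "\<lambda>t. Re (evolve H t \<rho> $$ (i,i))"
  have H: "H \<in> carrier_mat n n" and \<rho>: "\<rho> \<in> carrier_mat n n"
    using herm dens by (simp_all add: hermitian_carrier density_carrier)
  have "isCont ?q 0"
    by (rule DERIV_isCont[OF has_real_derivative_evolve_diag[OF H \<rho> i]])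
  then have "(?q \<longlongrightarrow> 0) (at 0)"
    using zero by (simp add: isCont_def diag_probs_def evolve_at_0[OF H \<rho>])
  then have "\<forall>\<^sub>F t in at 0. ?q t < 1"
    by (rule order_tendstoD(2)) simp
  then show ?thesis
    using evolve_diag_nonneg[OF herm dens i] by (auto elim!: eventually_mono intro!: mult_log_nonpos)
qed

text \<open>The entropy terms with p_i = 0 need not be differentiable at t = 0, but they are
  nonnegative near 0 and vanish at 0; having a local minimum there, they cannot contribute
  to a derivative of the sum.\<close>

lemma rel_coh_evolve_derivative_eq_coherence_rate:
  assumes D: "((\<lambda>t. rel_coh (evolve H t \<rho>)) has_real_derivative D) (at 0)"
  shows "D = coherence_rate n H \<rho>"
proof -
  have H: "H \<in> carrier_mat n n" and \<rho>: "\<rho> \<in> carrier_mat n n"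
    using herm dens by (simp_all add: hermitian_carrier density_carrier)
  let ?q = "\<lambda>i t. Re (evolve H t \<rho> $$ (i,i))"
  let ?f = "\<lambda>i t. - (?q i t * log 2 (?q i t))"
  let ?f' = "\<lambda>i. - (log 2 (diag_probs \<rho> i) + 1 / ln 2) * net_current n H \<rho> i"
  define P where "P = {i. i < n \<and> 0 < diag_probs \<rho> i}"
  have sum: "((\<lambda>t. \<Sum>i<n. ?f i t) has_real_derivative D) (at 0)"
    using DERIV_add[OF D DERIV_const[of "vn_entropy \<rho>"]] by (simp add: rel_coh_evolve[OF H \<rho>])
  have min: "\<forall>\<^sub>F t in at 0. ?f i 0 \<le> ?f i t" if "i \<in> {..<n} - P" for i
  proof -
    have i: "i < n"
      using that by simp
    then have zero: "diag_probs \<rho> i = 0"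
      using that diag_probs_nonneg[OF dens i] by (simp add: P_def)
    then have "?f i 0 = 0"
      by (simp add: diag_probs_def evolve_at_0[OF H \<rho>])
    then show ?thesis
      using evolve_diag_entropy_nonneg_near_0[OF i zero] by (auto elim!: eventually_mono)
  qed
  have deriv: "(?f i has_real_derivative ?f' i) (at 0)" if "i \<in> P" for i
    using that by (intro has_real_derivative_evolve_diag_entropy) (auto simp: P_def)
  have "D = (\<Sum>i\<in>P. ?f' i)"
    by (rule has_real_derivative_sum_local_min[OF _ _ deriv min sum]) (auto simp: P_def)
  also have "\<dots> = (\<Sum>i<n. ?f' i)"
  proof (rule sum.mono_neutral_left)
    show "\<forall>i\<in>{..<n} - P. ?f' i = 0"
    proof
      fix i assume i: "i \<in> {..<n} - P"
      then have "diag_probs \<rho> i = 0"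
        using diag_probs_nonneg[OF dens, of i] by (simp add: P_def)
      then show "?f' i = 0"
        using i net_current_zero[OF dens] by simp
    qed
  qed (auto simp: P_def)
  finally show ?thesis
    by (simp add: coherence_rate_eq_net_currents)
qed

lemma rel_coh_evolve_has_derivative:
  assumes support:
    "\<And>i a. i < n \<Longrightarrow> a < n \<Longrightarrow> diag_probs \<rho> i = 0 \<Longrightarrow> H $$ (i,a) = 0 \<and> H $$ (a,i) = 0"
  shows "((\<lambda>t. rel_coh (evolve H t \<rho>)) has_real_derivative coherence_rate n H \<rho>) (at 0)"
proof -
  have H: "H \<in> carrier_mat n n" and \<rho>: "\<rho> \<in> carrier_mat n n"
    using herm dens by (simp_all add: hermitian_carrier density_carrier)
  let ?q = "\<lambda>i t. Re (evolve H t \<rho> $$ (i,i))"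
  let ?f' = "\<lambda>i. - (log 2 (diag_probs \<rho> i) + 1 / ln 2) * net_current n H \<rho> i"
  have "((\<lambda>t. - (?q i t * log 2 (?q i t))) has_real_derivative ?f' i) (at 0)" if i: "i < n" for i
  proof (cases "diag_probs \<rho> i = 0")
    case True
    have "?q i t = 0" for t
      using True support[OF i _ True] by (simp add: evolve_diag_isolated[OF H \<rho> i] diag_probs_def)
    then show ?thesis
      by (simp add: net_current_zero[OF dens i True])
  next
    case False
    then have "0 < diag_probs \<rho> i"
      using diag_probs_nonneg[OF dens i] by simp
    then show ?thesis
      by (rule has_real_derivative_evolve_diag_entropy[OF i])
  qed
  then have "((\<lambda>t. (\<Sum>i<n. - (?q i t * log 2 (?q i t))) - vn_entropy \<rho>) has_real_derivative
      (\<Sum>i<n. ?f' i) - 0) (at 0)"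
    by (intro DERIV_diff DERIV_sum DERIV_const) auto
  then show ?thesis
    by (simp add: rel_coh_evolve[OF H \<rho>] coherence_rate_eq_net_currents)
qed

end

section \<open>The upper bound\<close>

lemma hs_norm_eq_sqrt_sum:
  assumes "H \<in> carrier_mat n n"
  shows "hs_norm H = sqrt (\<Sum>i<n. \<Sum>j<n. (cmod (H $$ (i,j)))\<^sup>2)"
proof -
  have "(adj H * H) $$ (j,j) = (\<Sum>i<n. cnj (H $$ (i,j)) * H $$ (i,j))" if "j < n" for j
    using assms that by (subst index_mult_mat_sum[of _ n n _ n]) (auto simp: adj_def)
  then have "Re (mtrace (adj H * H)) = (\<Sum>j<n. \<Sum>i<n. Re (cnj (H $$ (i,j)) * H $$ (i,j)))"
    using assms by (simp add: mtrace_def adj_def Re_sum)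
  also have "\<dots> = (\<Sum>i<n. \<Sum>j<n. (cmod (H $$ (i,j)))\<^sup>2)"
  proof -
    have "Re (cnj z * z) = (cmod z)\<^sup>2" for z
      by (simp add: cmod_def power2_eq_square)
    then show ?thesis
      by (subst sum.swap) (simp only:)
  qed
  finally show ?thesis
    by (simp add: hs_norm_def)
qed

lemma surprisal_var_eq_pair_sum:
  assumes "prob_dist n p"
  shows "(\<Sum>i<n. \<Sum>a<n. p i * p a * (log 2 (p a) - log 2 (p i))\<^sup>2) = 2 * surprisal_var n p"
proof -
  define L where "L i = log 2 (p i)" for i
  define M1 where "M1 = (\<Sum>a<n. p a * L a)"
  define M2 where "M2 = (\<Sum>a<n. p a * (L a)\<^sup>2)"
  have total: "(\<Sum>a<n. p a) = 1"
    using assms by (simp add: prob_dist_def)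
  have "(\<Sum>i<n. \<Sum>a<n. p i * p a * (L a - L i)\<^sup>2)
      = (\<Sum>i<n. \<Sum>a<n. p i * (p a * (L a)\<^sup>2)) - 2 * (\<Sum>i<n. \<Sum>a<n. (p i * L i) * (p a * L a))
        + (\<Sum>i<n. \<Sum>a<n. (p i * (L i)\<^sup>2) * p a)"
    by (simp add: power2_eq_square algebra_simps sum.distrib sum_subtractf sum_distrib_left)
  also have "(\<Sum>i<n. \<Sum>a<n. p i * (p a * (L a)\<^sup>2)) = M2"
    by (simp add: M2_def total flip: sum_distrib_left sum_distrib_right)
  also have "(\<Sum>i<n. \<Sum>a<n. (p i * L i) * (p a * L a)) = M1\<^sup>2"
    by (simp add: M1_def power2_eq_square flip: sum_distrib_left sum_distrib_right)
  also have "(\<Sum>i<n. \<Sum>a<n. (p i * (L i)\<^sup>2) * p a) = M2"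
    by (simp add: M2_def total flip: sum_distrib_left sum_distrib_right)
  also have "M2 - 2 * M1\<^sup>2 + M2 = 2 * surprisal_var n p"
    by (simp add: surprisal_var_def M1_def M2_def L_def sum_negf)
  finally show ?thesis
    by (simp add: L_def)
qed

lemma surprisal_var_nonneg:
  assumes "prob_dist n p"
  shows "0 \<le> surprisal_var n p"
proof -
  have "0 \<le> (\<Sum>i<n. \<Sum>a<n. p i * p a * (log 2 (p a) - log 2 (p i))\<^sup>2)"
    using assms by (auto simp: prob_dist_def intro!: sum_nonneg)
  then show ?thesis
    using surprisal_var_eq_pair_sum[OF assms] by simp
qed

lemma prob_dist_diag_probs: "density n \<rho> \<Longrightarrow> prob_dist n (diag_probs \<rho>)"
proof -
  assume dens: "density n \<rho>"
  then have "(\<Sum>i<n. \<rho> $$ (i,i)) = 1"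
    using density_carrier[OF dens] by (simp add: density_def mtrace_def)
  then have "(\<Sum>i<n. diag_probs \<rho> i) = 1"
    by (simp add: diag_probs_def flip: Re_sum)
  then show ?thesis
    using density_diag(2)[OF dens] by (simp add: prob_dist_def diag_probs_def)
qed

lemma abs_prob_current_le:
  assumes dens: "density n \<rho>" and "i < n" "a < n"
  shows "\<bar>prob_current H \<rho> i a\<bar> \<le> cmod (H $$ (i,a)) * sqrt (diag_probs \<rho> i * diag_probs \<rho> a)"
proof -
  have "cmod (\<rho> $$ (a,i)) \<le> sqrt (diag_probs \<rho> i * diag_probs \<rho> a)"
    using density_offdiag_bound[OF dens assms(3,2)] by (simp add: diag_probs_def real_le_rsqrt mult.commute)
  then show ?thesis
    unfolding prob_current_def using abs_Im_le_cmod[of "H $$ (i,a) * \<rho> $$ (a,i)"]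
    by (simp add: norm_mult) (meson mult_left_mono norm_ge_zero order_trans)
qed

lemma Cauchy_Schwarz_double_sum:
  fixes a b :: "'i \<Rightarrow> 'j \<Rightarrow> real"
  shows "(\<Sum>i\<in>I. \<Sum>j\<in>J. a i j * b i j)\<^sup>2
    \<le> (\<Sum>i\<in>I. \<Sum>j\<in>J. (a i j)\<^sup>2) * (\<Sum>i\<in>I. \<Sum>j\<in>J. (b i j)\<^sup>2)"
  using Cauchy_Schwarz_ineq_sum[of "\<lambda>x. a (fst x) (snd x)" "\<lambda>x. b (fst x) (snd x)" "I \<times> J"]
  by (simp add: sum.cartesian_product')

text \<open>Each term of \<open>coherence_rate\<close> is bounded by |H_ia| sqrt (p_i p_a) |log p_a - log p_i|;
  Cauchy-Schwarz against the Hilbert-Schmidt norm then leaves the variance of the surprisal.\<close>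

lemma coherence_rate_le:
  assumes H: "H \<in> carrier_mat n n" and norm: "hs_norm H \<le> 1" and dens: "density n \<rho>"
  shows "coherence_rate n H \<rho> \<le> sqrt (2 * surprisal_var n (diag_probs \<rho>))"
proof -
  let ?p = "diag_probs \<rho>"
  define A where "A i a = cmod (H $$ (i,a))" for i a
  define B where "B i a = sqrt (?p i * ?p a) * \<bar>log 2 (?p a) - log 2 (?p i)\<bar>" for i a
  have entry_bound: "prob_current H \<rho> i a * (log 2 (?p a) - log 2 (?p i)) \<le> A i a * B i a"
    if "i < n" "a < n" for i a
  proof -
    have J: "\<bar>prob_current H \<rho> i a\<bar> \<le> A i a * sqrt (?p i * ?p a)"
      unfolding A_def by (rule abs_prob_current_le[OF dens that])
    have "prob_current H \<rho> i a * (log 2 (?p a) - log 2 (?p i))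
        \<le> \<bar>prob_current H \<rho> i a\<bar> * \<bar>log 2 (?p a) - log 2 (?p i)\<bar>"
      by (simp add: abs_mult[symmetric])
    also have "\<dots> \<le> A i a * sqrt (?p i * ?p a) * \<bar>log 2 (?p a) - log 2 (?p i)\<bar>"
      by (rule mult_right_mono[OF J]) simp
    finally show ?thesis
      by (simp add: B_def mult.assoc)
  qed
  have "coherence_rate n H \<rho> \<le> (\<Sum>i<n. \<Sum>a<n. A i a * B i a)"
    unfolding coherence_rate_def using entry_bound by (intro sum_mono) auto
  also have "\<dots> \<le> sqrt ((\<Sum>i<n. \<Sum>a<n. A i a * B i a)\<^sup>2)"
    by simp
  also have "\<dots> \<le> sqrt ((\<Sum>i<n. \<Sum>a<n. (A i a)\<^sup>2) * (\<Sum>i<n. \<Sum>a<n. (B i a)\<^sup>2))"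
    by (rule real_sqrt_le_mono[OF Cauchy_Schwarz_double_sum])
  also have "\<dots> = hs_norm H * sqrt (\<Sum>i<n. \<Sum>a<n. (B i a)\<^sup>2)"
    by (simp add: hs_norm_eq_sqrt_sum[OF H] A_def real_sqrt_mult)
  also have "(\<Sum>i<n. \<Sum>a<n. (B i a)\<^sup>2) = 2 * surprisal_var n ?p"
  proof -
    have "(B i a)\<^sup>2 = ?p i * ?p a * (log 2 (?p a) - log 2 (?p i))\<^sup>2" if "i < n" "a < n" for i a
      using diag_probs_nonneg[OF dens that(1)] diag_probs_nonneg[OF dens that(2)]
      by (simp add: B_def power_mult_distrib)
    then show ?thesis
      by (simp add: surprisal_var_eq_pair_sum[OF prob_dist_diag_probs[OF dens], symmetric])
  qed
  also have "hs_norm H * sqrt (2 * surprisal_var n ?p) \<le> sqrt (2 * surprisal_var n ?p)"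
    using mult_right_mono[OF norm, of "sqrt (2 * surprisal_var n ?p)"]
      surprisal_var_nonneg[OF prob_dist_diag_probs[OF dens]] by simp
  finally show ?thesis .
qed

section \<open>Maximising the surprisal variance\<close>

lemma continuous_on_mult_neg_log_power:
  "continuous_on {0..1} (\<lambda>x::real. x * (- log 2 x) ^ k)"
proof -
  have cont: "isCont (\<lambda>x::real. x * (- log 2 x) ^ k) x" if "0 < x" for x
    using that by (intro continuous_intros) auto
  show ?thesis
  proof (rule continuous_on_IccI)
    show "((\<lambda>x::real. x * (- log 2 x) ^ k) \<longlongrightarrow> 0 * (- log 2 0) ^ k) (at_right 0)"
      by simp real_asymp
    show "((\<lambda>x::real. x * (- log 2 x) ^ k) \<longlongrightarrow> 1 * (- log 2 1) ^ k) (at_left 1)"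
      using cont[of 1] by (simp add: isCont_def filterlim_at_split)
    show "(\<lambda>x::real. x * (- log 2 x) ^ k) \<midarrow>x\<rightarrow> x * (- log 2 x) ^ k" if "0 < x" for x
      using cont[OF that] by (simp add: isCont_def)
  qed simp
qed

text \<open>Distributions are padded with zeros beyond n, which makes the simplex a compact subset
  of \<open>nat \<Rightarrow> real\<close> in the product topology.\<close>

definition prob_simplex :: "nat \<Rightarrow> (nat \<Rightarrow> real) set" where
  "prob_simplex n = {p. (\<forall>i<n. 0 \<le> p i \<and> p i \<le> 1) \<and> (\<forall>i\<ge>n. p i = 0) \<and> (\<Sum>i<n. p i) = 1}"

lemma compact_prob_simplex: "compact (prob_simplex n)"
proof -
  define S where "S i = (if i < n then {0..1::real} else {0})" for i
  have "compactin (product_topology (\<lambda>i. euclidean) UNIV) (PiE UNIV S)"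
    unfolding compactin_PiE S_def by auto
  then have "compact (PiE UNIV S)"
    by (simp add: euclidean_product_topology)
  moreover have "closed {p :: nat \<Rightarrow> real. (\<Sum>i<n. p i) = 1}"
    by (intro closed_Collect_eq continuous_intros continuous_on_sum)
      (auto intro: continuous_on_product_coordinates)
  moreover have "prob_simplex n = PiE UNIV S \<inter> {p. (\<Sum>i<n. p i) = 1}"
  proof -
    have "p i \<in> S i \<longleftrightarrow> (i < n \<longrightarrow> 0 \<le> p i \<and> p i \<le> 1) \<and> (n \<le> i \<longrightarrow> p i = 0)" for p i
      by (simp add: S_def)
    then have "p \<in> PiE UNIV S \<longleftrightarrow> (\<forall>i<n. 0 \<le> p i \<and> p i \<le> 1) \<and> (\<forall>i\<ge>n. p i = 0)" for p
      by (simp add: PiE_iff all_conj_distrib)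
    then show ?thesis
      by (auto simp: prob_simplex_def)
  qed
  ultimately show ?thesis
    by (simp add: compact_Int_closed)
qed

lemma continuous_on_surprisal_var: "continuous_on (prob_simplex n) (surprisal_var n)"
proof -
  have coord: "continuous_on (prob_simplex n) (\<lambda>p. p i)" for i
    by (rule continuous_on_subset[OF continuous_on_product_coordinates]) simp
  have img: "(\<lambda>p. p i) ` prob_simplex n \<subseteq> {0..1}" if "i < n" for i
    using that by (auto simp: prob_simplex_def)
  have "continuous_on (prob_simplex n) (\<lambda>p. p i * (- log 2 (p i)) ^ k)" if "i < n" for i k
    by (rule continuous_on_compose2[OF continuous_on_mult_neg_log_power coord img[OF that]])
  then have moment: "continuous_on (prob_simplex n) (\<lambda>p. \<Sum>i<n. p i * (- log 2 (p i)) ^ k)" for k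
    by (intro continuous_on_sum) auto
  have "continuous_on (prob_simplex n)
      (\<lambda>p. (\<Sum>i<n. p i * (- log 2 (p i)) ^ 2) - (\<Sum>i<n. p i * (- log 2 (p i)) ^ 1) ^ 2)"
    by (intro continuous_on_diff continuous_on_power moment)
  then show ?thesis
    by (simp add: surprisal_var_def[abs_def])
qed

lemma surprisal_var_attains_max:
  assumes "1 \<le> n"
  shows "\<exists>p0. prob_dist n p0 \<and> (\<forall>p. prob_dist n p \<longrightarrow> surprisal_var n p \<le> surprisal_var n p0)"
proof -
  have "(\<lambda>i. if i = 0 then 1 else 0) \<in> prob_simplex n"
    using assms by (auto simp: prob_simplex_def)
  then obtain p0 where p0: "p0 \<in> prob_simplex n" "\<forall>p\<in>prob_simplex n. surprisal_var n p \<le> surprisal_var n p0"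
    using continuous_attains_sup[OF compact_prob_simplex _ continuous_on_surprisal_var] by blast
  have "surprisal_var n p \<le> surprisal_var n p0" if p: "prob_dist n p" for p
  proof -
    define p' where "p' i = (if i < n then p i else 0)" for i
    have "p i \<le> 1" if "i < n" for i
      using p that member_le_sum[of i "{..<n}" p] by (auto simp: prob_dist_def)
    then have "p' \<in> prob_simplex n"
      using p by (simp add: prob_simplex_def prob_dist_def p'_def)
    moreover have "surprisal_var n p' = surprisal_var n p"
      by (simp add: surprisal_var_def p'_def)
    ultimately show ?thesis
      using p0(2) by fastforce
  qed
  moreover have "prob_dist n p0"
    using p0(1) by (simp add: prob_simplex_def prob_dist_def)
  ultimately show ?thesis
    by blast
qed

section \<open>Optimal Hamiltonians\<close>

lemma hermitian_smult_real:
  assumes "hermitian n H"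
  shows "hermitian n (of_real c \<cdot>\<^sub>m H)"
proof -
  have "adj (of_real c \<cdot>\<^sub>m H) = of_real c \<cdot>\<^sub>m adj H"
    by (auto simp: adj_def intro!: eq_matI)
  then show ?thesis
    using assms by (simp add: hermitian_def)
qed

lemma hs_norm_smult_real:
  assumes "H \<in> carrier_mat n n"
  shows "hs_norm (of_real c \<cdot>\<^sub>m H) = \<bar>c\<bar> * hs_norm H"
proof -
  have "(\<Sum>i<n. \<Sum>j<n. (cmod ((of_real c \<cdot>\<^sub>m H) $$ (i,j)))\<^sup>2)
      = c\<^sup>2 * (\<Sum>i<n. \<Sum>j<n. (cmod (H $$ (i,j)))\<^sup>2)"
    using assms by (simp add: norm_mult power_mult_distrib sum_distrib_left)
  then show ?thesis
    by (simp add: hs_norm_eq_sqrt_sum[OF assms] hs_norm_eq_sqrt_sum[OF smult_carrier_mat[OF assms]] real_sqrt_mult)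
qed

lemma coherence_rate_smult_real:
  assumes "H \<in> carrier_mat n n"
  shows "coherence_rate n (of_real c \<cdot>\<^sub>m H) \<rho> = c * coherence_rate n H \<rho>"
  using assms by (simp add: coherence_rate_def prob_current_def sum_distrib_left mult.assoc)

definition classical_state :: "nat \<Rightarrow> (nat \<Rightarrow> real) \<Rightarrow> complex mat" where
  "classical_state n p = mat n n (\<lambda>(i,j). if i = j then of_real (p i) else 0)"

lemma density_classical_state:
  assumes p: "prob_dist n p"
  shows "density n (classical_state n p)"
proof -
  let ?\<rho> = "classical_state n p"
  have "hermitian n ?\<rho>"
    by (auto simp: hermitian_def adj_def classical_state_def intro!: eq_matI)
  moreover have "0 \<le> Re (conjugate v \<bullet> (?\<rho> *\<^sub>v v))" if "v \<in> carrier_vec n" for v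
  proof -
    have "conjugate v \<bullet> (?\<rho> *\<^sub>v v) = (\<Sum>i<n. of_real (p i) * (cnj (v $ i) * v $ i))"
      using that
      by (auto simp: scalar_prod_def classical_state_def atLeast0LessThan if_distrib[of "\<lambda>x. x * _"]
          sum.delta cong: if_cong intro!: sum.cong)
    then show ?thesis
      using p by (auto simp: prob_dist_def Re_sum complex_mult_cnj intro!: sum_nonneg)
  qed
  moreover have "mtrace ?\<rho> = 1"
    using p by (simp add: mtrace_def classical_state_def prob_dist_def flip: of_real_sum)
  ultimately show ?thesis
    by (simp add: density_def)
qed

lemma diag_probs_classical_state: "i < n \<Longrightarrow> diag_probs (classical_state n p) i = p i"
  by (simp add: diag_probs_def classical_state_def)

lemma rel_coh_evolve_derivative_exists:
  assumes herm: "hermitian n H" and "1 \<le> n"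
  shows "\<exists>\<rho> D. density n \<rho> \<and> ((\<lambda>t. rel_coh (evolve H t \<rho>)) has_real_derivative D) (at 0)"
proof -
  let ?\<rho> = "classical_state n (\<lambda>_. 1 / real n)"
  have "prob_dist n (\<lambda>_. 1 / real n)"
    using assms by (simp add: prob_dist_def)
  then have "density n ?\<rho>"
    by (rule density_classical_state)
  moreover have "diag_probs ?\<rho> i \<noteq> 0" if "i < n" for i
    using that by (simp add: diag_probs_classical_state)
  ultimately show ?thesis
    using rel_coh_evolve_has_derivative[OF herm] by blast
qed

definition sqrt_pure_state :: "nat \<Rightarrow> (nat \<Rightarrow> real) \<Rightarrow> complex mat" where
  "sqrt_pure_state n p = mat n n (\<lambda>(i,j). of_real (sqrt (p i) * sqrt (p j)))"

text \<open>The equality case of the Cauchy-Schwarz step in \<open>coherence_rate_le\<close> for the pure state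
  \<open>sqrt_pure_state\<close>, with amplitudes sqrt p_i.\<close>

definition log_ratio_generator :: "nat \<Rightarrow> (nat \<Rightarrow> real) \<Rightarrow> complex mat" where
  "log_ratio_generator n p =
    mat n n (\<lambda>(i,j). \<i> * of_real (sqrt (p i) * sqrt (p j) * (log 2 (p j) - log 2 (p i))))"

lemma density_sqrt_pure_state:
  assumes p: "prob_dist n p"
  shows "density n (sqrt_pure_state n p)"
proof -
  let ?\<rho> = "sqrt_pure_state n p"
  have "hermitian n ?\<rho>"
    by (auto simp: hermitian_def adj_def sqrt_pure_state_def mult.commute intro!: eq_matI)
  moreover have "0 \<le> Re (conjugate v \<bullet> (?\<rho> *\<^sub>v v))" if "v \<in> carrier_vec n" for v
  proof -
    define w where "w = (\<Sum>j<n. of_real (sqrt (p j)) * v $ j)"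
    have "conjugate v \<bullet> (?\<rho> *\<^sub>v v) = (\<Sum>i<n. cnj (v $ i) * (of_real (sqrt (p i)) * w))"
      using that by (auto simp: scalar_prod_def sqrt_pure_state_def w_def atLeast0LessThan
          sum_distrib_left mult_ac intro!: sum.cong)
    also have "\<dots> = (\<Sum>i<n. cnj (v $ i) * of_real (sqrt (p i))) * w"
      by (simp add: sum_distrib_left sum_distrib_right mult_ac)
    also have "(\<Sum>i<n. cnj (v $ i) * of_real (sqrt (p i))) = cnj w"
      by (simp add: w_def mult.commute)
    finally show ?thesis
      by (simp add: sum_squares_ge_zero)
  qed
  moreover have "mtrace ?\<rho> = 1"
  proof -
    have "mtrace ?\<rho> = (\<Sum>i<n. of_real (p i))"
      using p by (auto simp: mtrace_def sqrt_pure_state_def prob_dist_def simp flip: of_real_mult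
          intro!: sum.cong)
    also have "\<dots> = 1"
      using p by (simp add: prob_dist_def flip: of_real_sum)
    finally show ?thesis .
  qed
  ultimately show ?thesis
    by (simp add: density_def)
qed

lemma diag_probs_sqrt_pure_state:
  "prob_dist n p \<Longrightarrow> i < n \<Longrightarrow> diag_probs (sqrt_pure_state n p) i = p i"
  by (simp add: diag_probs_def sqrt_pure_state_def prob_dist_def)

lemma hermitian_log_ratio_generator: "hermitian n (log_ratio_generator n p)"
  by (auto simp: hermitian_def adj_def log_ratio_generator_def algebra_simps intro!: eq_matI)

lemma hs_norm_log_ratio_generator:
  assumes p: "prob_dist n p"
  shows "hs_norm (log_ratio_generator n p) = sqrt (2 * surprisal_var n p)"
proof -
  have "(cmod (log_ratio_generator n p $$ (i,j)))\<^sup>2 = p i * p j * (log 2 (p j) - log 2 (p i))\<^sup>2"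
    if "i < n" "j < n" for i j
    using that p
    by (simp add: log_ratio_generator_def norm_mult power_mult_distrib prob_dist_def del: of_real_mult of_real_diff)
  then show ?thesis
    by (simp add: hs_norm_eq_sqrt_sum[of _ n] log_ratio_generator_def surprisal_var_eq_pair_sum[OF p, symmetric])
qed

lemma coherence_rate_log_ratio_generator:
  assumes p: "prob_dist n p"
  shows "coherence_rate n (log_ratio_generator n p) (sqrt_pure_state n p) = 2 * surprisal_var n p"
proof -
  have "prob_current (log_ratio_generator n p) (sqrt_pure_state n p) i a
      * (log 2 (p a) - log 2 (p i)) = p i * p a * (log 2 (p a) - log 2 (p i))\<^sup>2"
    if "i < n" "a < n" for i a
  proof -
    have "prob_current (log_ratio_generator n p) (sqrt_pure_state n p) i a
        = (sqrt (p i))\<^sup>2 * (sqrt (p a))\<^sup>2 * (log 2 (p a) - log 2 (p i))"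
      using that by (simp add: prob_current_def log_ratio_generator_def sqrt_pure_state_def power2_eq_square
          mult_ac del: of_real_mult of_real_diff)
    then show ?thesis
      using that p by (simp add: prob_dist_def power2_eq_square)
  qed
  then show ?thesis
    using p by (simp add: coherence_rate_def diag_probs_sqrt_pure_state surprisal_var_eq_pair_sum[OF p, symmetric])
qed

lemma coherence_generation_attained:
  assumes p: "prob_dist n p"
  shows "\<exists>H \<rho>. hermitian n H \<and> hs_norm H \<le> 1 \<and> density n \<rho> \<and>
    ((\<lambda>t. rel_coh (evolve H t \<rho>)) has_real_derivative sqrt (2 * surprisal_var n p)) (at 0)"
proof -
  define N where "N = sqrt (2 * surprisal_var n p)"
  define H where "H = of_real (1 / N) \<cdot>\<^sub>m log_ratio_generator n p"
  let ?\<rho> = "sqrt_pure_state n p"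
  have X: "log_ratio_generator n p \<in> carrier_mat n n"
    by (simp add: log_ratio_generator_def)
  have herm: "hermitian n H"
    unfolding H_def by (rule hermitian_smult_real[OF hermitian_log_ratio_generator])
  have "hs_norm H = \<bar>1 / N\<bar> * N"
    unfolding H_def hs_norm_smult_real[OF X] hs_norm_log_ratio_generator[OF p] N_def ..
  then have norm: "hs_norm H \<le> 1"
    by (cases "N = 0") (auto simp: N_def)
  have dens: "density n ?\<rho>"
    by (rule density_sqrt_pure_state[OF p])
  have "H $$ (i,a) = 0 \<and> H $$ (a,i) = 0" if "i < n" "a < n" "diag_probs ?\<rho> i = 0" for i a
    using that by (simp add: H_def log_ratio_generator_def diag_probs_sqrt_pure_state[OF p])
  then have "((\<lambda>t. rel_coh (evolve H t ?\<rho>)) has_real_derivative coherence_rate n H ?\<rho>) (at 0)"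
    by (rule rel_coh_evolve_has_derivative[OF herm dens])
  moreover have "coherence_rate n H ?\<rho> = N"
  proof -
    have "2 * surprisal_var n p = N\<^sup>2"
      using surprisal_var_nonneg[OF p] by (simp add: N_def)
    then have "coherence_rate n H ?\<rho> = 1 / N * N\<^sup>2"
      unfolding H_def coherence_rate_smult_real[OF X] coherence_rate_log_ratio_generator[OF p] by simp
    then show ?thesis
      by (simp add: power2_eq_square)
  qed
  ultimately show ?thesis
    using herm norm dens by (auto simp: N_def)
qed

lemma rel_coh_evolve_derivative_le:
  assumes herm: "hermitian n H" and norm: "hs_norm H \<le> 1" and dens: "density n \<rho>"
    and D: "((\<lambda>t. rel_coh (evolve H t \<rho>)) has_real_derivative D) (at 0)"
  shows "D \<le> sqrt (2 * surprisal_var n (diag_probs \<rho>))"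
  using rel_coh_evolve_derivative_eq_coherence_rate[OF herm dens D]
    coherence_rate_le[OF hermitian_carrier[OF herm] norm dens]
  by simp

theorem theorem1:
  fixes d :: nat
  assumes "d \<ge> 2"
  shows "\<exists>H0 p0. hermitian d H0 \<and> hs_norm H0 \<le> 1 \<and> prob_dist d p0 \<and>
     (\<forall>H. hermitian d H \<and> hs_norm H \<le> 1 \<longrightarrow> Cgen d H \<le> Cgen d H0) \<and>
     (\<forall>p. prob_dist d p \<longrightarrow> sqrt (2 * surprisal_var d p) \<le> sqrt (2 * surprisal_var d p0)) \<and>
     Cgen d H0 = sqrt (2 * surprisal_var d p0)"
proof -
  obtain p0 where p0: "prob_dist d p0"
    and max: "\<And>p. prob_dist d p \<Longrightarrow> surprisal_var d p \<le> surprisal_var d p0"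
    using surprisal_var_attains_max[of d] assms by auto
  define B where "B = sqrt (2 * surprisal_var d p0)"
  obtain H0 \<rho>0 where H0: "hermitian d H0" "hs_norm H0 \<le> 1" "density d \<rho>0"
    and D0: "((\<lambda>t. rel_coh (evolve H0 t \<rho>0)) has_real_derivative B) (at 0)"
    using coherence_generation_attained[OF p0] unfolding B_def by blast
  have bound: "D \<le> B" if "hermitian d H" "hs_norm H \<le> 1" "density d \<rho>"
    and "((\<lambda>t. rel_coh (evolve H t \<rho>)) has_real_derivative D) (at 0)" for H \<rho> D
    using rel_coh_evolve_derivative_le[OF that] max[OF prob_dist_diag_probs[OF that(3)]]
    unfolding B_def by (meson order_trans mult_left_mono real_sqrt_le_mono zero_le_numeral)
  have "Cgen d H0 = B"
    unfolding Cgen_def using H0 D0 bound by (intro cSup_eq_maximum) blast+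
  moreover have "Cgen d H \<le> B" if "hermitian d H" "hs_norm H \<le> 1" for H
    unfolding Cgen_def using rel_coh_evolve_derivative_exists[OF that(1)] assms that bound
    by (intro cSup_least) auto
  ultimately show ?thesis
    using H0 p0 max unfolding B_def by (metis real_sqrt_le_mono mult_left_mono zero_le_numeral)
qed

end
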